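(* Let $r\ge1$ and let $D_r$ be the $r\times(2r-1)$ matrix with rows indexed by $1,\dots,r$ and columns indexed by $0,1,\dots,2r-2$, whose $(k,c)$ entry is $1$ if $c=r-k$ or $c=r-2+k$, and $0$ otherwise (so row $1$ has a single $1$ in column $r-1$, and row $k\ge2$ has $1$'s in columns $r-k$ and $r-2+k$). For a partition $\lambda$ with $l(\lambda)\le r$ and $\lambda_1\le r-1$, let $I(\lambda)=\{\lambda_r,\lambda_{r-1}+1,\dots,\lambda_1+r-1\}\subseteq\{0,\dots,2r-2\}$ and let $\Delta_{I(\lambda)}(D_r)$ be the $r\times r$ submatrix of $D_r$ consisting of the columns indexed by $I(\lambda)$ (in increasing order). Then $$\det\Delta_{I(\lambda)}(D_r)=\begin{cases}(-1)^{r(r-1)/2+|\lambda|/2}&\text{if }\lambda\in\mathcal P_r,\\ 0&\text{otherwise.}\end{cases}$$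
   Context: Partitions: a partition $\lambda=(\lambda_1\ge\lambda_2\ge\cdots)$ of nonnegative integers with finitely many nonzero parts; $l(\lambda)$ is the number of nonzero parts, $|\lambda|=\sum_i\lambda_i$. In Frobenius notation $\lambda=(\alpha_1,\dots,\alpha_d\,|\,\beta_1,\dots,\beta_d)$ where $d=\#\{i:\lambda_i\ge i\}$, $\alpha_i=\lambda_i-i$, $\beta_i=\lambda'_i-i$ ($\lambda'$ the conjugate partition). For an integer $m\ge 0$, $\mathcal{P}_m$ is the set of partitions $\lambda$ with $l(\lambda)\le m$ of the form $(\alpha_1,\dots,\alpha_d\,|\,\alpha_1+1,\dots,\alpha_d+1)$ (the empty partition included; $|\lambda|$ is then even). *)

theory Defs
  imports "Jordan_Normal_Form.Determinant"
begin

text \<open>A partition is represented as a function lam :: nat => nat, read 1-indexed: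
  lam i is the i-th part (i >= 1); the value lam 0 is never used.\<close>

definition is_partition :: "(nat \<Rightarrow> nat) \<Rightarrow> bool" where
  "is_partition lam \<longleftrightarrow> (\<forall>i\<ge>1. lam (Suc i) \<le> lam i) \<and> finite {i. 1 \<le> i \<and> lam i \<noteq> 0}"

definition part_length :: "(nat \<Rightarrow> nat) \<Rightarrow> nat" where
  "part_length lam = card {i. 1 \<le> i \<and> lam i \<noteq> 0}"

definition part_size :: "(nat \<Rightarrow> nat) \<Rightarrow> nat" where
  "part_size lam = (\<Sum>i\<in>{i. 1 \<le> i \<and> lam i \<noteq> 0}. lam i)"

definition conj_part :: "(nat \<Rightarrow> nat) \<Rightarrow> nat \<Rightarrow> nat" where
  "conj_part lam j = card {i. 1 \<le> i \<and> j \<le> lam i}"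

definition frob_rank :: "(nat \<Rightarrow> nat) \<Rightarrow> nat" where
  "frob_rank lam = card {i. 1 \<le> i \<and> i \<le> lam i}"

definition frob_alpha :: "(nat \<Rightarrow> nat) \<Rightarrow> nat \<Rightarrow> int" where
  "frob_alpha lam i = int (lam i) - int i"

definition frob_beta :: "(nat \<Rightarrow> nat) \<Rightarrow> nat \<Rightarrow> int" where
  "frob_beta lam i = int (conj_part lam i) - int i"

definition in_P :: "nat \<Rightarrow> (nat \<Rightarrow> nat) \<Rightarrow> bool" where
  "in_P m lam \<longleftrightarrow> is_partition lam \<and> part_length lam \<le> m \<and>
     (\<forall>i. 1 \<le> i \<and> i \<le> frob_rank lam \<longrightarrow> frob_beta lam i = frob_alpha lam i + 1)"

text \<open>The r x (2r-1) matrix D_r, with 0-based row index i (= k-1, k = 1..r) and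
  0-based column index c in 0..2r-2: entry 1 iff c = r-k or c = r-2+k.\<close>
definition D_mat :: "nat \<Rightarrow> int mat" where
  "D_mat r = mat r (2*r - 1) (\<lambda>(i, c). let k = i + 1 in
      if c = r - k \<or> c = r + k - 2 then 1 else 0)"

definition I_idx :: "nat \<Rightarrow> (nat \<Rightarrow> nat) \<Rightarrow> nat \<Rightarrow> nat" where
  "I_idx r lam j = lam (r - j) + j"

definition Delta_I :: "nat \<Rightarrow> (nat \<Rightarrow> nat) \<Rightarrow> int mat" where
  "Delta_I r lam = mat r r (\<lambda>(i, j). D_mat r $$ (i, I_idx r lam j))"

end

(*
  Column j of Delta_I(D_r) has a single entry 1, in row |x_j| where
  x_j = lam_(r-j) - (r-j) + 1 is strictly increasing in j. So the determinant vanishes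
  unless |x| permutes {0, ..., r-1}. In that case the 1 of the last row lies in the last
  column (x_j = r-1) or in the first (x_j = -(r-1)), and expanding along the last row
  repeatedly gives det = (-1)^(sum of |x_j| over x_j < 0). A pigeonhole argument on the
  strictly decreasing sequence lam_k - k + 1 shows that its absolute values are distinct
  on {1..r} exactly when lam'_i = lam_i + 1 for all i <= d, i.e. when lam is in P_r.
  The sign follows from sum |x_j| = r(r-1)/2 and sum x_j = |lam| - r(r-1)/2.
*)
theory Submission
  imports Defs
begin

lemma inj_on_image_eq_of_card_eq:
  assumes "finite B" "inj_on f A" "f ` A \<subseteq> B" "card A = card B"
  shows "f ` A = B"
  using assms by (metis card_image card_subset_eq)

definition abs_incidence_mat :: "nat \<Rightarrow> (nat \<Rightarrow> int) \<Rightarrow> int mat" where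
  "abs_incidence_mat n x = mat n n (\<lambda>(i, j). if int i = \<bar>x j\<bar> then 1 else 0)"

lemma abs_image_eq_lessThan:
  assumes "inj_on (\<lambda>j. \<bar>x j\<bar>) {..<n}" and "\<And>j. j < n \<Longrightarrow> \<bar>x j\<bar> < int n"
  shows "(\<lambda>j. nat \<bar>x j\<bar>) ` {..<n} = {..<n}"
proof (rule inj_on_image_eq_of_card_eq)
  show "inj_on (\<lambda>j. nat \<bar>x j\<bar>) {..<n}"
    using assms(1) by (auto simp: inj_on_def)
qed (use assms(2) in \<open>auto simp: nat_less_iff\<close>)

lemma det_abs_incidence_mat:
  assumes "strict_mono_on {..<n} x" and "\<And>j. j < n \<Longrightarrow> \<bar>x j\<bar> < int n"
    and "inj_on (\<lambda>j. \<bar>x j\<bar>) {..<n}"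
  shows "det (abs_incidence_mat n x) = (-1) ^ (\<Sum>j<n. nat (- x j))"
  using assms
proof (induction n arbitrary: x)
  case 0
  then show ?case by (simp add: abs_incidence_mat_def)
next
  case (Suc n)
  note mono = Suc.prems(1) and bound = Suc.prems(2) and inj = Suc.prems(3)
  define A where "A = abs_incidence_mat (Suc n) x"
  have "n \<in> (\<lambda>j. nat \<bar>x j\<bar>) ` {..<Suc n}"
    using abs_image_eq_lessThan[OF inj bound] by simp
  then obtain js where js: "js < Suc n" "\<bar>x js\<bar> = int n" by auto
  have bound_other: "\<bar>x j\<bar> < int n" if "j < Suc n" "j \<noteq> js" for j
    using inj_onD[OF inj, of j js] bound[of j] js that by fastforce
  have last_row: "A $$ (n, j) = (if j = js then 1 else 0)" if "j < Suc n" for j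
    using bound_other[of j] js that by (fastforce simp: A_def abs_incidence_mat_def)
  have "det A = (\<Sum>j<Suc n. A $$ (n, j) * cofactor A n j)"
    by (rule laplace_expansion_row) (auto simp: A_def abs_incidence_mat_def)
  also have "\<dots> = (\<Sum>j<Suc n. if j = js then cofactor A n j else 0)"
    by (intro sum.cong) (auto simp: last_row)
  finally have expand: "det A = (-1) ^ (n + js) * det (mat_delete A n js)"
    using js by (simp add: cofactor_def)
  consider "x js = int n" | "x js = - int n" using js by linarith
  then show ?case
  proof cases
    case 1
    have "js = n"
      using strict_mono_onD[OF mono, of js n] bound[of n] js 1 by fastforce
    have "mat_delete A n n = abs_incidence_mat n x"
      by (rule eq_matI) (auto simp: A_def abs_incidence_mat_def mat_delete_def)
    moreover have "det (abs_incidence_mat n x) = (-1) ^ (\<Sum>j<n. nat (- x j))"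
    proof (rule Suc.IH)
      show "strict_mono_on {..<n} x"
        using mono by (rule monotone_on_subset) auto
      show "inj_on (\<lambda>j. \<bar>x j\<bar>) {..<n}"
        using inj by (rule inj_on_subset) auto
    qed (use bound_other \<open>js = n\<close> in auto)
    ultimately show ?thesis
      using expand \<open>js = n\<close> 1 by (simp add: A_def)
  next
    case 2
    have "js = 0"
      using strict_mono_onD[OF mono, of 0 js] bound[of 0] js 2 by fastforce
    have "mat_delete A n 0 = abs_incidence_mat n (x \<circ> Suc)"
      by (rule eq_matI) (auto simp: A_def abs_incidence_mat_def mat_delete_def)
    moreover have "det (abs_incidence_mat n (x \<circ> Suc)) = (-1) ^ (\<Sum>j<n. nat (- (x \<circ> Suc) j))"
    proof (rule Suc.IH)
      show "strict_mono_on {..<n} (x \<circ> Suc)"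
        using mono by (auto simp: strict_mono_on_def)
      show "inj_on (\<lambda>j. \<bar>(x \<circ> Suc) j\<bar>) {..<n}"
        using inj by (auto simp: inj_on_def)
    qed (use bound_other \<open>js = 0\<close> in auto)
    moreover have "(\<Sum>j<Suc n. nat (- x j)) = n + (\<Sum>j<n. nat (- (x \<circ> Suc) j))"
      unfolding sum.lessThan_Suc_shift using 2 \<open>js = 0\<close> by simp
    ultimately show ?thesis
      using expand \<open>js = 0\<close> by (simp add: A_def power_add)
  qed
qed

lemma det_abs_incidence_mat_eq_0:
  assumes "\<not> inj_on (\<lambda>j. \<bar>x j\<bar>) {..<n}"
  shows "det (abs_incidence_mat n x) = 0"
proof -
  obtain a b where ab: "a < n" "b < n" "a \<noteq> b" "\<bar>x a\<bar> = \<bar>x b\<bar>"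
    using assms by (auto simp: inj_on_def)
  have "col (abs_incidence_mat n x) a = col (abs_incidence_mat n x) b"
    using ab by (intro eq_vecI) (auto simp: abs_incidence_mat_def)
  then show ?thesis
    using ab by (intro det_identical_columns[of _ n a b]) (auto simp: abs_incidence_mat_def)
qed

lemma sum_nat_abs_eq:
  assumes "inj_on (\<lambda>j. \<bar>x j\<bar>) {..<n}" and "\<And>j. j < n \<Longrightarrow> \<bar>x j\<bar> < int n"
  shows "(\<Sum>j<n. nat \<bar>x j\<bar>) = n * (n - 1) div 2"
proof -
  have "inj_on (\<lambda>j. nat \<bar>x j\<bar>) {..<n}"
    using assms(1) by (auto simp: inj_on_def)
  then have "(\<Sum>j<n. nat \<bar>x j\<bar>) = \<Sum>((\<lambda>j. nat \<bar>x j\<bar>) ` {..<n})"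
    by (simp add: sum.reindex)
  also have "\<dots> = \<Sum>{0..<n}"
    using abs_image_eq_lessThan[OF assms] by (simp add: atLeast0LessThan)
  finally show ?thesis by (simp add: Sum_Ico_nat)
qed

lemma minus_one_power_sum_neg_part:
  assumes "inj_on (\<lambda>j. \<bar>x j\<bar>) {..<n}" and "\<And>j. j < n \<Longrightarrow> \<bar>x j\<bar> < int n"
    and "(\<Sum>j<n. x j) = int s - int (n * (n - 1) div 2)"
  shows "(-1::int) ^ (\<Sum>j<n. nat (- x j)) = (-1) ^ (n * (n - 1) div 2 + s div 2)"
proof -
  define N where "N = (\<Sum>j<n. nat (- x j))"
  define T where "T = n * (n - 1) div 2"
  have "T = (\<Sum>j<n. nat \<bar>x j\<bar>)"
    using sum_nat_abs_eq[OF assms(1,2)] by (simp add: T_def)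
  then have "int T = (\<Sum>j<n. int (nat \<bar>x j\<bar>))"
    by simp
  also have "\<dots> = (\<Sum>j<n. x j + 2 * int (nat (- x j)))"
    by (intro sum.cong) auto
  also have "\<dots> = int s - int T + 2 * int N"
    using assms(3) by (simp add: N_def T_def sum.distrib sum_distrib_left)
  finally have "s = 2 * (T - N)" "N \<le> T" by linarith+
  then have "even (T + s div 2 + N)" by simp
  then show ?thesis
    unfolding N_def[symmetric] T_def[symmetric] by (auto simp: minus_one_power_iff)
qed

lemma partition_antimono:
  assumes "is_partition lam" "1 \<le> i" "i \<le> j"
  shows "lam j \<le> lam i"
  using assms(3)
proof (induction j rule: dec_induct)
  case (step j)
  then have "lam (Suc j) \<le> lam j"
    using assms(1,2) unfolding is_partition_def by simp
  then show ?case
    using step.IH by linarith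
qed simp

lemma le_card_initial_segment_iff:
  assumes fin: "finite {j. 1 \<le> j \<and> P j}"
    and down: "\<And>i j. 1 \<le> i \<Longrightarrow> i \<le> j \<Longrightarrow> P j \<Longrightarrow> P i" and "1 \<le> k"
  shows "k \<le> card {j. 1 \<le> j \<and> P j} \<longleftrightarrow> P k"
proof
  assume "P k"
  then have "{1..k} \<subseteq> {j. 1 \<le> j \<and> P j}"
    using down by auto
  then have "card {1..k} \<le> card {j. 1 \<le> j \<and> P j}"
    by (rule card_mono[OF fin])
  then show "k \<le> card {j. 1 \<le> j \<and> P j}"
    by simp
next
  assume le: "k \<le> card {j. 1 \<le> j \<and> P j}"
  show "P k"
  proof (rule ccontr)
    assume "\<not> P k"
    then have "\<not> k \<le> j" if "1 \<le> j" "P j" for j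
      using down[OF \<open>1 \<le> k\<close> _ that(2)] by blast
    then have "{j. 1 \<le> j \<and> P j} \<subseteq> {1..<k}"
      by (auto simp: not_le)
    then have "card {j. 1 \<le> j \<and> P j} \<le> card {1..<k}"
      by (rule card_mono[rotated]) simp
    then show False
      using le \<open>1 \<le> k\<close> by simp
  qed
qed

lemma finite_partition_support:
  "is_partition lam \<Longrightarrow> finite {j. 1 \<le> j \<and> lam j \<noteq> 0}"
  by (simp add: is_partition_def)

lemma le_frob_rank_iff:
  assumes "is_partition lam" "1 \<le> i"
  shows "i \<le> frob_rank lam \<longleftrightarrow> i \<le> lam i"
  unfolding frob_rank_def
proof (rule le_card_initial_segment_iff)
  show "finite {j. 1 \<le> j \<and> j \<le> lam j}"
    by (rule finite_subset[OF _ finite_partition_support[OF assms(1)]]) auto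
  show "i' \<le> lam i'" if "1 \<le> i'" "i' \<le> j" "j \<le> lam j" for i' j
    using partition_antimono[OF assms(1) that(1,2)] that(2,3) by linarith
qed (rule assms(2))

lemma le_conj_part_iff:
  assumes "is_partition lam" "1 \<le> i" "1 \<le> k"
  shows "k \<le> conj_part lam i \<longleftrightarrow> i \<le> lam k"
  unfolding conj_part_def
proof (rule le_card_initial_segment_iff)
  show "finite {j. 1 \<le> j \<and> i \<le> lam j}"
    by (rule finite_subset[OF _ finite_partition_support[OF assms(1)]]) (use assms(2) in auto)
  show "i \<le> lam j'" if "1 \<le> j'" "j' \<le> j" "i \<le> lam j" for j' j
    using partition_antimono[OF assms(1) that(1,2)] that(3) by linarith
qed (rule assms(3))

lemma partition_eq_0_of_length_less:
  assumes "is_partition lam" "part_length lam < k"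
  shows "lam k = 0"
proof (rule ccontr)
  assume "lam k \<noteq> 0"
  moreover have "k \<le> part_length lam \<longleftrightarrow> lam k \<noteq> 0"
    unfolding part_length_def
  proof (rule le_card_initial_segment_iff)
    show "lam i \<noteq> 0" if "1 \<le> i" "i \<le> j" "lam j \<noteq> 0" for i j
      using partition_antimono[OF assms(1) that(1,2)] that(3) by linarith
  qed (use assms finite_partition_support in auto)
  ultimately show False
    using assms(2) by simp
qed

lemma part_size_eq_sum:
  assumes "is_partition lam" "part_length lam \<le> r"
  shows "part_size lam = (\<Sum>k = 1..r. lam k)"
  unfolding part_size_def
proof (rule sum.mono_neutral_left)
  show "{i. 1 \<le> i \<and> lam i \<noteq> 0} \<subseteq> {1..r}"
    using partition_eq_0_of_length_less[OF assms(1)] assms(2) by (auto simp: not_less[symmetric])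
qed simp_all

lemma in_P_iff:
  assumes "is_partition lam" "part_length lam \<le> r"
  shows "in_P r lam \<longleftrightarrow>
    (\<forall>i\<ge>1. i \<le> lam i \<longrightarrow> i \<le> lam (lam i + 1) \<and> lam (lam i + 2) < i)"
proof -
  have conj: "conj_part lam i = lam i + 1 \<longleftrightarrow> i \<le> lam (lam i + 1) \<and> lam (lam i + 2) < i"
    if "1 \<le> i" for i
    using le_conj_part_iff[OF assms(1) that, of "lam i + 1"]
      le_conj_part_iff[OF assms(1) that, of "lam i + 2"] by auto
  have "in_P r lam \<longleftrightarrow> (\<forall>i\<ge>1. i \<le> lam i \<longrightarrow> conj_part lam i = lam i + 1)"
    using assms le_frob_rank_iff[OF assms(1)]
    unfolding in_P_def frob_beta_def frob_alpha_def by auto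
  then show ?thesis
    using conj by blast
qed

definition shifted_part :: "(nat \<Rightarrow> nat) \<Rightarrow> nat \<Rightarrow> int" where
  "shifted_part lam k = int (lam k) - int k + 1"

lemma shifted_part_strict_antimono:
  assumes "is_partition lam" "1 \<le> i" "i < k"
  shows "shifted_part lam k < shifted_part lam i"
  using partition_antimono[OF assms(1,2), of k] assms(3) by (simp add: shifted_part_def)

lemma abs_shifted_part_less:
  assumes "is_partition lam" "lam 1 \<le> r - 1" "1 \<le> k" "k \<le> r"
  shows "\<bar>shifted_part lam k\<bar> < int r"
  using partition_antimono[OF assms(1), of 1 k] assms by (auto simp: shifted_part_def)

lemma inj_on_abs_shifted_part:
  assumes part: "is_partition lam"
    and frob: "\<forall>i\<ge>1. i \<le> lam i \<longrightarrow> i \<le> lam (lam i + 1) \<and> lam (lam i + 2) < i"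
  shows "inj_on (\<lambda>k. \<bar>shifted_part lam k\<bar>) {1..}"
proof -
  have no_opposite: "shifted_part lam k \<noteq> - shifted_part lam i" if "1 \<le> i" "i < k" for i k
  proof
    assume "shifted_part lam k = - shifted_part lam i"
    then have sum: "lam i + lam k + 2 = i + k"
      by (simp add: shifted_part_def)
    show False
    proof (cases "i \<le> lam i")
      case True
      with frob \<open>1 \<le> i\<close> have "i \<le> lam (lam i + 1)" "lam (lam i + 2) < i" by auto
      moreover have "lam (lam i + 1) \<le> lam k" if "k \<le> lam i + 1"
        using partition_antimono[OF part, of k "lam i + 1"] that \<open>1 \<le> i\<close> \<open>i < k\<close> by simp
      moreover have "lam k \<le> lam (lam i + 2)" if "lam i + 2 \<le> k"
        using partition_antimono[OF part, of "lam i + 2" k] that by simp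
      ultimately show False
        using sum by linarith
    next
      case False
      then show False
        using partition_antimono[OF part \<open>1 \<le> i\<close>, of k] \<open>i < k\<close> sum by linarith
    qed
  qed
  show ?thesis
  proof (rule inj_onI)
    fix a b assume "a \<in> {1..}" "b \<in> {1..}" "\<bar>shifted_part lam a\<bar> = \<bar>shifted_part lam b\<bar>"
    then show "a = b"
      using no_opposite[of a b] no_opposite[of b a]
        shifted_part_strict_antimono[OF part, of a b] shifted_part_strict_antimono[OF part, of b a]
      by (cases a b rule: linorder_cases) (auto simp: abs_eq_iff)
  qed
qed

lemma shifted_part_antimono:
  assumes "is_partition lam" "1 \<le> i" "i \<le> k"
  shows "shifted_part lam k \<le> shifted_part lam i"
  using partition_antimono[OF assms] assms(3) by (simp add: shifted_part_def)

lemma abs_shifted_part_image: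
  assumes part: "is_partition lam" and top: "lam 1 \<le> r - 1"
    and inj: "inj_on (\<lambda>k. \<bar>shifted_part lam k\<bar>) {1..r}"
  shows "(\<lambda>k. \<bar>shifted_part lam k\<bar>) ` {1..r} = {0..<int r}"
proof (rule inj_on_image_eq_of_card_eq[OF _ inj])
  show "(\<lambda>k. \<bar>shifted_part lam k\<bar>) ` {1..r} \<subseteq> {0..<int r}"
    using abs_shifted_part_less[OF part top] by auto
qed simp_all

lemma le_lam_lam_Suc_of_inj_on_abs_shifted_part:
  assumes part: "is_partition lam" and top: "lam 1 \<le> r - 1"
    and inj: "inj_on (\<lambda>k. \<bar>shifted_part lam k\<bar>) {1..r}"
    and i: "1 \<le> i" "i \<le> lam i"
  shows "i \<le> lam (lam i + 1)"
proof (rule ccontr)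
  assume "\<not> i \<le> lam (lam i + 1)"
  define y where "y = shifted_part lam"
  define m where "m = lam i + 1 - i"
  have y_i: "y i = int m" and low: "y (lam i + 1) \<le> - int m"
    using i \<open>\<not> i \<le> lam (lam i + 1)\<close> by (simp_all add: y_def m_def shifted_part_def)
  have "m \<le> r"
    using partition_antimono[OF part, of 1 i] top i by (simp add: m_def)
  \<comment> \<open>Pigeonhole: the values \<open>0..m-1\<close> of \<open>\<bar>y\<bar>\<close> can only be taken strictly between \<open>i\<close> and
    \<open>lam i + 1\<close>, where there are just \<open>m - 1\<close> indices.\<close>
  have "{0..<int m} \<subseteq> (\<lambda>k. \<bar>y k\<bar>) ` {i<..<lam i + 1}"
  proof
    fix v assume "v \<in> {0..<int m}"
    then have "v \<in> (\<lambda>k. \<bar>y k\<bar>) ` {1..r}"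
      using abs_shifted_part_image[OF part top inj] \<open>m \<le> r\<close> by (simp add: y_def)
    then obtain k where k: "k \<in> {1..r}" "\<bar>y k\<bar> = v" by blast
    with \<open>v \<in> {0..<int m}\<close> have "\<bar>y k\<bar> < int m"
      by simp
    have "\<not> k \<le> i"
      using shifted_part_antimono[OF part, of k i] k(1) y_i \<open>\<bar>y k\<bar> < int m\<close> by (auto simp: y_def)
    moreover have "\<not> lam i + 1 \<le> k"
      using shifted_part_antimono[OF part, of "lam i + 1" k] low \<open>\<bar>y k\<bar> < int m\<close> by (auto simp: y_def)
    ultimately show "v \<in> (\<lambda>k. \<bar>y k\<bar>) ` {i<..<lam i + 1}"
      using k(2) by auto
  qed
  then have "card {0..<int m} \<le> card ((\<lambda>k. \<bar>y k\<bar>) ` {i<..<lam i + 1})"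
    by (rule card_mono[rotated]) simp
  also have "\<dots> \<le> card {i<..<lam i + 1}"
    by (rule card_image_le) simp
  finally show False
    using i by (simp add: m_def)
qed

lemma lam_lam_Suc_Suc_less_of_inj_on_abs_shifted_part:
  assumes part: "is_partition lam" and len: "part_length lam \<le> r"
    and inj: "inj_on (\<lambda>k. \<bar>shifted_part lam k\<bar>) {1..r}"
    and i: "1 \<le> i" "i \<le> lam i"
  shows "lam (lam i + 2) < i"
proof (cases "lam i + 2 \<le> r")
  case False
  then show ?thesis
    using partition_eq_0_of_length_less[OF part, of "lam i + 2"] len i by simp
next
  case True
  show ?thesis
  proof (rule ccontr)
    assume "\<not> lam (lam i + 2) < i"
    define y where "y = shifted_part lam"
    define m where "m = lam i + 1 - i"
    have y_i: "y i = int m" and high: "- int m \<le> y (lam i + 2)"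
      using i \<open>\<not> lam (lam i + 2) < i\<close> by (simp_all add: y_def m_def shifted_part_def)
    have "(\<lambda>k. \<bar>y k\<bar>) ` {i<..lam i + 2} \<subseteq> {0..<int m}"
    proof (intro image_subsetI)
      fix k assume k: "k \<in> {i<..lam i + 2}"
      then have "y k < int m" "- int m \<le> y k"
        using shifted_part_strict_antimono[OF part \<open>1 \<le> i\<close>, of k]
          shifted_part_antimono[OF part, of k "lam i + 2"] high y_i i by (auto simp: y_def)
      moreover have "\<bar>y k\<bar> \<noteq> \<bar>y i\<bar>"
        using inj_onD[OF inj, of k i] k i True by (auto simp: y_def)
      ultimately show "\<bar>y k\<bar> \<in> {0..<int m}"
        using y_i by auto
    qed
    moreover have "inj_on (\<lambda>k. \<bar>y k\<bar>) {i<..lam i + 2}"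
      by (rule inj_on_subset[OF inj[folded y_def]]) (use True in auto)
    ultimately have "card {i<..lam i + 2} \<le> m"
      using card_inj_on_le[of _ "{i<..lam i + 2}" "{0..<int m}"] by simp
    then show False
      using i by (simp add: m_def)
  qed
qed

lemma bij_betw_reverse_index: "bij_betw (\<lambda>j. r - j) {..<r} {1..(r::nat)}"
  by (rule bij_betw_byWitness[where f' = "\<lambda>k. r - k"]) auto

lemma in_P_iff_inj_on_abs_shifted_part:
  assumes "is_partition lam" "part_length lam \<le> r" "lam 1 \<le> r - 1"
  shows "in_P r lam \<longleftrightarrow> inj_on (\<lambda>j. \<bar>shifted_part lam (r - j)\<bar>) {..<r}"
proof -
  have "in_P r lam \<longleftrightarrow> inj_on (\<lambda>k. \<bar>shifted_part lam k\<bar>) {1..r}"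
    unfolding in_P_iff[OF assms(1,2)]
  proof (intro iffI allI impI)
    assume "\<forall>i\<ge>1. i \<le> lam i \<longrightarrow> i \<le> lam (lam i + 1) \<and> lam (lam i + 2) < i"
    then show "inj_on (\<lambda>k. \<bar>shifted_part lam k\<bar>) {1..r}"
      by (rule inj_on_subset[OF inj_on_abs_shifted_part[OF assms(1)]]) auto
  qed (use le_lam_lam_Suc_of_inj_on_abs_shifted_part[OF assms(1,3)]
      lam_lam_Suc_Suc_less_of_inj_on_abs_shifted_part[OF assms(1,2)] in auto)
  also have "\<dots> \<longleftrightarrow> inj_on (\<lambda>j. \<bar>shifted_part lam (r - j)\<bar>) {..<r}"
    using comp_inj_on_iff[OF bij_betw_imp_inj_on[OF bij_betw_reverse_index],
        of "\<lambda>k. \<bar>shifted_part lam k\<bar>" r]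
    by (simp add: bij_betw_imp_surj_on[OF bij_betw_reverse_index] comp_def)
  finally show ?thesis .
qed

lemma Delta_I_eq_abs_incidence_mat:
  assumes "is_partition lam" "lam 1 \<le> r - 1"
  shows "Delta_I r lam = abs_incidence_mat r (\<lambda>j. shifted_part lam (r - j))"
proof (rule eq_matI)
  fix i j
  assume "i < dim_row (abs_incidence_mat r (\<lambda>j. shifted_part lam (r - j)))"
    and "j < dim_col (abs_incidence_mat r (\<lambda>j. shifted_part lam (r - j)))"
  then have i: "i < r" and j: "j < r"
    by (auto simp: abs_incidence_mat_def)
  have "1 \<le> r - j"
    using j by simp
  with assms have lam_le: "lam (r - j) \<le> r - 1"
    using partition_antimono[of lam 1 "r - j"] by simp
  then have "I_idx r lam j < 2 * r - 1"
    using j by (simp add: I_idx_def)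
  then have "Delta_I r lam $$ (i, j) =
      (if I_idx r lam j = r - (i + 1) \<or> I_idx r lam j = r + (i + 1) - 2 then 1 else 0)"
    using i j by (simp add: Delta_I_def D_mat_def Let_def)
  also have "\<dots> = abs_incidence_mat r (\<lambda>j. shifted_part lam (r - j)) $$ (i, j)"
    using i j lam_le by (auto simp: I_idx_def shifted_part_def abs_incidence_mat_def)
  finally show "Delta_I r lam $$ (i, j) = abs_incidence_mat r (\<lambda>j. shifted_part lam (r - j)) $$ (i, j)" .
qed (auto simp: Delta_I_def abs_incidence_mat_def)

lemma sum_shifted_part:
  assumes "is_partition lam" "part_length lam \<le> r"
  shows "(\<Sum>k = 1..r. shifted_part lam k) = int (part_size lam) - int (r * (r - 1) div 2)"
proof -
  have reindex: "(\<Sum>k = 1..r. g k) = (\<Sum>j<r. g (Suc j))" for g :: "nat \<Rightarrow> int"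
    using sum.reindex[of Suc "{..<r}" g] by (simp add: image_Suc_lessThan)
  have "(\<Sum>k = 1..r. shifted_part lam k) = (\<Sum>j<r. int (lam (Suc j))) - (\<Sum>j<r. int j)"
    unfolding reindex by (simp add: shifted_part_def sum_subtractf)
  also have "(\<Sum>j<r. int (lam (Suc j))) = int (part_size lam)"
    using part_size_eq_sum[OF assms] reindex[of "\<lambda>k. int (lam k)"] by simp
  also have "(\<Sum>j<r. int j) = int (r * (r - 1) div 2)"
    using Sum_Ico_nat[of 0 r] by (simp add: atLeast0LessThan flip: of_nat_sum)
  finally show ?thesis .
qed

theorem mainTheorem4:
  fixes r :: nat and lam :: "nat \<Rightarrow> nat"
  assumes "r \<ge> 1"
    and "is_partition lam"
    and "part_length lam \<le> r"
    and "lam 1 \<le> r - 1"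
  shows "det (Delta_I r lam) =
    (if in_P r lam then (-1) ^ (r * (r - 1) div 2 + part_size lam div 2) else 0)"
proof -
  define x where "x j = shifted_part lam (r - j)" for j
  have Delta: "Delta_I r lam = abs_incidence_mat r x"
    unfolding x_def by (rule Delta_I_eq_abs_incidence_mat[OF assms(2,4)])
  have P_iff: "in_P r lam \<longleftrightarrow> inj_on (\<lambda>j. \<bar>x j\<bar>) {..<r}"
    unfolding x_def by (rule in_P_iff_inj_on_abs_shifted_part[OF assms(2-4)])
  have mono: "strict_mono_on {..<r} x"
    by (rule strict_mono_onI) (auto simp: x_def intro!: shifted_part_strict_antimono[OF assms(2)])
  have bound: "\<bar>x j\<bar> < int r" if "j < r" for j
    using abs_shifted_part_less[OF assms(2,4)] that by (simp add: x_def)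
  show ?thesis
  proof (cases "inj_on (\<lambda>j. \<bar>x j\<bar>) {..<r}")
    case True
    have "(\<Sum>j<r. x j) = int (part_size lam) - int (r * (r - 1) div 2)"
      using sum.reindex_bij_betw[OF bij_betw_reverse_index, of "shifted_part lam" r]
        sum_shifted_part[OF assms(2,3)] by (simp add: x_def)
    then show ?thesis
      using det_abs_incidence_mat[OF mono bound True] minus_one_power_sum_neg_part[OF True bound]
        Delta P_iff True by simp
  next
    case False
    then show ?thesis
      using det_abs_incidence_mat_eq_0 Delta P_iff by simp
  qed
qed

end
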